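(* In the setting described in the context, Method 2 is well-defined: for any initial point $x^0\in\mathcal H$, each set $T_k\cap\Gamma_k$ is nonempty, so the projection $x^{k+1}=P_{T_k\cap\Gamma_k}(x^0)$ exists and the sequence $(x^k)_{k\in\mathbb N}$ can be generated.
   Context: Let $\mathcal H$ be a real Hilbert space with inner product $\langle\cdot,\cdot\rangle$ and norm $\|\cdot\|$. Let $A_1:\mathcal H\to\mathcal H$ be $\beta$-cocoercive for some $\beta>0$ (i.e. $\langle A_1x-A_1y,x-y\rangle\ge\beta\|A_1x-A_1y\|^2$ for all $x,y$), let $A_2:\mathcal H\to\mathcal H$ be maximally monotone and uniformly continuous, let $B:\mathcal H\rightrightarrows\mathcal H$ be maximally monotone, and set $A:=A_1+A_2$. Assume $\operatorname{zer}(A+B):=\{x:0\in Ax+Bx\}\neq\emptyset$. $J_{\alpha B}:=(I+\alpha B)^{-1}$ for $\alpha>0$, and $P_C$ denotes the orthogonal projection onto a nonempty closed convex set $C$. Fix $\theta,\delta\in(0,1)$, $\bar\delta>0$ with $1-\delta-\bar\delta>0$, and $\alpha_{-1}>0$ with $\alpha_{-1}\le4\beta\bar\delta$. Conceptual Algorithm: pick $x^0\in\mathcal H$. Given $x^k$ and $\alpha_{k-1}$, for $j\in\mathbb N$ let $\bar x^k_j:=J_{\alpha_{k-1}\theta^jB}(x^k-\alpha_{k-1}\theta^jAx^k)$ and let $j(k)$ be the smallest $j\in\mathbb N$ with $\alpha_{k-1}\theta^j\langle A_2x^k-A_2\bar x^k_j,x^k-\bar x^k_j\rangle\le\delta\|x^k-\bar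 x^k_j\|^2$. Set $\alpha_k:=\alpha_{k-1}\theta^{j(k)}$, $\bar x^k:=J_{\alpha_kB}(x^k-\alpha_kAx^k)$, $r_k:=\frac{\bar\delta}{\alpha_k}\|x^k-\bar x^k\|^2$, $T_k:=\{x\in\mathcal H:\langle \frac{x^k-\bar x^k}{\alpha_k}-(A_2x^k-A_2\bar x^k),x-\bar x^k\rangle\le r_k\}$ and $\Gamma_k:=\{x\in\mathcal H:\langle x^0-x^k,x-x^k\rangle\le0\}$. Method 2 sets $x^{k+1}:=P_{T_k\cap\Gamma_k}(x^0)$ and stops if $x^{k+1}=x^k$. *)

theory Defs
  imports "HOL-Analysis.Analysis"
begin

definition cocoercive :: "real \<Rightarrow> ('a::real_inner \<Rightarrow> 'a) \<Rightarrow> bool" where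
  "cocoercive \<beta> T \<longleftrightarrow>
     (\<forall>x y. inner (T x - T y) (x - y) \<ge> \<beta> * (norm (T x - T y))\<^sup>2)"

definition monotone_op :: "('a::real_inner \<Rightarrow> 'a set) \<Rightarrow> bool" where
  "monotone_op B \<longleftrightarrow>
     (\<forall>x y u v. u \<in> B x \<longrightarrow> v \<in> B y \<longrightarrow> inner (u - v) (x - y) \<ge> 0)"

definition maximal_monotone :: "('a::real_inner \<Rightarrow> 'a set) \<Rightarrow> bool" where
  "maximal_monotone B \<longleftrightarrow> monotone_op B \<and>
     (\<forall>C. monotone_op C \<and> (\<forall>x. B x \<subseteq> C x) \<longrightarrow> C = B)"

definition sv :: "('a \<Rightarrow> 'a) \<Rightarrow> 'a \<Rightarrow> 'a set" where
  "sv T = (\<lambda>x. {T x})"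

text \<open>Resolvent J_{\<alpha>B} = (I + \<alpha>B)^{-1}: J z is the x with z \<in> x + \<alpha> B x.\<close>
definition resolvent :: "real \<Rightarrow> ('a::real_vector \<Rightarrow> 'a set) \<Rightarrow> 'a \<Rightarrow> 'a" where
  "resolvent \<alpha> B z = (THE x. z \<in> (\<lambda>b. x + \<alpha> *\<^sub>R b) ` B x)"

definition is_proj :: "'a::real_normed_vector set \<Rightarrow> 'a \<Rightarrow> 'a \<Rightarrow> bool" where
  "is_proj C z p \<longleftrightarrow> p \<in> C \<and> (\<forall>y\<in>C. norm (z - p) \<le> norm (z - y))"

end

theory Submission
  imports Defs
begin

text \<open>Fix a zero \<open>xs\<close> of \<open>A + B\<close>.
Resolvents of a maximal monotone \<open>B\<close> are total, because \<open>I + \<gamma>B\<close> is surjective (Minty);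
surjectivity is obtained by minimising \<open>t + \<parallel>x\<parallel>\<^sup>2/2 + \<parallel>u\<parallel>\<^sup>2/2\<close> over the epigraph of the
Fitzpatrick function of \<open>B\<close>, a convex set on which minimising sequences are Cauchy.
The line search terminates: if every trial step \<open>\<alpha>\<^sub>k\<^sub>-\<^sub>1\<theta>\<^sup>j\<close> were rejected, the uniform
continuity of \<open>A\<^sub>2\<close> would force the trial points to converge to \<open>x\<^sup>k\<close> faster than the steps
vanish, and closedness of the graph of \<open>B\<close> would make \<open>x\<^sup>k\<close> a zero of \<open>A + B\<close>, where every
step is accepted. Finally, monotonicity of \<open>B\<close> and \<open>A\<^sub>2\<close> and cocoercivity of \<open>A\<^sub>1\<close>
(with \<open>\<alpha>\<^sub>k \<le> 4\<beta>\<delta>bar\<close>) put \<open>xs\<close> into \<open>T\<^sub>k\<close>, and the variational inequality of the projection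
keeps \<open>xs\<close> in every \<open>\<Gamma>\<^sub>k\<close>; so \<open>T\<^sub>k \<inter> \<Gamma>\<^sub>k\<close> is a nonempty closed convex set, onto which
\<open>x\<^sup>0\<close> has a projection.\<close>

section \<open>Convex minimisation in Hilbert space\<close>

lemma le_if_le_add_small_multiple:
  fixes a b K :: real
  assumes "K \<ge> 0" and "\<And>t. 0 < t \<Longrightarrow> t \<le> 1 \<Longrightarrow> a \<le> b + t * K"
  shows "a \<le> b"
proof (rule field_le_epsilon)
  fix e :: real assume "0 < e"
  define t where "t = min 1 (e / (K + 1))"
  have t: "0 < t" "t \<le> 1" using \<open>0 < e\<close> \<open>K \<ge> 0\<close> by (auto simp: t_def)
  have "t * K \<le> e / (K + 1) * K" using \<open>K \<ge> 0\<close> by (intro mult_right_mono) (auto simp: t_def)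
  also have "\<dots> \<le> e" using \<open>0 < e\<close> \<open>K \<ge> 0\<close> by (simp add: field_simps)
  finally show "a \<le> b + e" using assms(2)[OF t] by linarith
qed

lemma Cauchy_if_norm_diff_sq_le:
  fixes s :: "nat \<Rightarrow> 'a::real_normed_vector"
  assumes "\<epsilon> \<longlonglongrightarrow> 0" and "\<And>n k. (norm (s n - s k))\<^sup>2 \<le> \<epsilon> n + \<epsilon> k"
  shows "Cauchy s"
proof (rule CauchyI)
  fix e :: real assume "0 < e"
  then have "\<forall>\<^sub>F n in sequentially. \<epsilon> n < e\<^sup>2 / 2"
    using \<open>\<epsilon> \<longlonglongrightarrow> 0\<close> by (intro order_tendstoD(2)) auto
  then obtain M where M: "\<And>n. n \<ge> M \<Longrightarrow> \<epsilon> n < e\<^sup>2 / 2"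
    unfolding eventually_sequentially by blast
  show "\<exists>M. \<forall>m\<ge>M. \<forall>n\<ge>M. norm (s m - s n) < e"
  proof (intro exI allI impI)
    fix m n assume "M \<le> m" "M \<le> n"
    then have "(norm (s m - s n))\<^sup>2 < e\<^sup>2"
      using assms(2)[of m n] M[of m] M[of n] by linarith
    then show "norm (s m - s n) < e" using \<open>0 < e\<close> by (simp add: power_less_imp_less_base)
  qed
qed

lemma obtain_minimizing_sequence:
  fixes f :: "'a \<Rightarrow> real"
  assumes "S \<noteq> {}" and "bdd_below (f ` S)"
  obtains s where "\<And>n. s n \<in> S" and "\<And>n. f (s n) < (INF y\<in>S. f y) + inverse (real (Suc n))"
proof -
  have "\<exists>y\<in>S. f y < (INF y\<in>S. f y) + inverse (real (Suc n))" for n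
    using cInf_lessD[of "f ` S" "(INF y\<in>S. f y) + inverse (real (Suc n))"] assms(1) by auto
  then show ?thesis using that by metis
qed

lemma parallelogram_law_midpoint:
  fixes a b z :: "'a::real_inner"
  shows "(norm (a - b))\<^sup>2
    = 2 * (norm (z - a))\<^sup>2 + 2 * (norm (z - b))\<^sup>2 - 4 * (norm (z - (1/2) *\<^sub>R (a + b)))\<^sup>2"
  by (simp add: power2_norm_eq_inner inner_simps inner_commute algebra_simps)

lemma norm_add_scaleR_sq:
  fixes a b :: "'a::real_inner"
  shows "(norm (a + t *\<^sub>R b))\<^sup>2 = (norm a)\<^sup>2 + 2 * t * inner a b + t\<^sup>2 * (norm b)\<^sup>2"
  unfolding power2_norm_eq_inner
  by (simp add: inner_add_left inner_add_right inner_commute algebra_simps power2_eq_square)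

lemma is_proj_exists:
  fixes C :: "'a::{real_inner,complete_space} set"
  assumes "closed C" and "convex C" and "C \<noteq> {}"
  obtains p where "is_proj C z p"
proof -
  define d where "d y = (norm (z - y))\<^sup>2" for y
  define m where "m = (INF y\<in>C. d y)"
  have bdd: "bdd_below (d ` C)" by (rule bdd_belowI2[of _ 0]) (simp add: d_def)
  then have m_le: "m \<le> d y" if "y \<in> C" for y
    unfolding m_def using that by (rule cINF_lower)
  obtain s where sC: "\<And>n. s n \<in> C" and s_min: "\<And>n. d (s n) < m + inverse (real (Suc n))"
    using obtain_minimizing_sequence[OF \<open>C \<noteq> {}\<close> bdd] unfolding m_def by blast
  have "Cauchy s"
  proof (rule Cauchy_if_norm_diff_sq_le)
    show "(\<lambda>n. 2 * inverse (real (Suc n))) \<longlonglongrightarrow> 0"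
      by (rule tendsto_mult_right_zero[OF LIMSEQ_inverse_real_of_nat])
    fix n k
    have "(1/2) *\<^sub>R (s n + s k) \<in> C"
      using convexD[OF \<open>convex C\<close> sC sC, of "1/2" "1/2"] by (simp add: scaleR_add_right)
    then have "m \<le> d ((1/2) *\<^sub>R (s n + s k))" by (rule m_le)
    then show "(norm (s n - s k))\<^sup>2 \<le> 2 * inverse (real (Suc n)) + 2 * inverse (real (Suc k))"
      using parallelogram_law_midpoint[of "s n" "s k" z] s_min[of n] s_min[of k]
      unfolding d_def by linarith
  qed
  then obtain p where lim: "s \<longlonglongrightarrow> p" using Cauchy_convergent convergent_def by blast
  have "p \<in> C" using closed_sequentially[OF \<open>closed C\<close>] sC lim by blast
  have "d p \<le> m"
  proof (rule LIMSEQ_le)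
    show "(\<lambda>n. d (s n)) \<longlonglongrightarrow> d p" unfolding d_def by (intro tendsto_intros lim)
    show "(\<lambda>n. m + inverse (real (Suc n))) \<longlonglongrightarrow> m" by (rule LIMSEQ_inverse_real_of_nat_add)
    show "\<exists>N. \<forall>n\<ge>N. d (s n) \<le> m + inverse (real (Suc n))"
      using s_min less_imp_le by blast
  qed
  then have "norm (z - p) \<le> norm (z - y)" if "y \<in> C" for y
    using m_le[OF that] by (simp add: d_def power2_le_imp_le)
  with \<open>p \<in> C\<close> show ?thesis using that unfolding is_proj_def by blast
qed

lemma is_proj_inner_le:
  fixes C :: "'a::real_inner set"
  assumes "is_proj C z p" and "convex C" and "y \<in> C"
  shows "inner (z - p) (y - p) \<le> 0"
proof -
  have "p \<in> C" and p_min: "\<And>y. y \<in> C \<Longrightarrow> norm (z - p) \<le> norm (z - y)"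
    using assms(1) unfolding is_proj_def by auto
  have "2 * inner (z - p) (y - p) \<le> 0 + t * (norm (y - p))\<^sup>2" if "0 < t" "t \<le> 1" for t
  proof -
    have "(1 - t) *\<^sub>R p + t *\<^sub>R y \<in> C"
      using convexD_alt[OF \<open>convex C\<close> \<open>p \<in> C\<close> \<open>y \<in> C\<close>, of t] that by simp
    then have "norm (z - p) \<le> norm (z - ((1 - t) *\<^sub>R p + t *\<^sub>R y))" by (rule p_min)
    also have "z - ((1 - t) *\<^sub>R p + t *\<^sub>R y) = (z - p) + (- t) *\<^sub>R (y - p)"
      by (simp add: algebra_simps)
    finally have "(norm (z - p))\<^sup>2 \<le> (norm ((z - p) + (- t) *\<^sub>R (y - p)))\<^sup>2"
      by (rule power_mono) simp
    also have "\<dots> = (norm (z - p))\<^sup>2 - t * (2 * inner (z - p) (y - p)) + t * (t * (norm (y - p))\<^sup>2)"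
      unfolding norm_add_scaleR_sq by (simp add: power2_eq_square)
    finally have "t * (2 * inner (z - p) (y - p)) \<le> t * (t * (norm (y - p))\<^sup>2)" by simp
    then show ?thesis using \<open>0 < t\<close> by simp
  qed
  then have "2 * inner (z - p) (y - p) \<le> 0"
    by (rule le_if_le_add_small_multiple[OF zero_le_power2])
  then show ?thesis by simp
qed

section \<open>Maximal monotone operators\<close>

lemma maximal_monotoneD:
  assumes "maximal_monotone B" and "b \<in> B a" and "b' \<in> B a'"
  shows "inner (b - b') (a - a') \<ge> 0"
  using assms unfolding maximal_monotone_def monotone_op_def by blast

lemma maximal_monotone_memI:
  fixes B :: "'a::real_inner \<Rightarrow> 'a set"
  assumes mm: "maximal_monotone B" and u: "\<And>a b. b \<in> B a \<Longrightarrow> inner (u - b) (x - a) \<ge> 0"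
  shows "u \<in> B x"
proof -
  define C where "C y = (if y = x then insert u (B x) else B y)" for y
  have "monotone_op C"
    unfolding monotone_op_def
  proof (intro allI impI)
    fix p q v w assume "v \<in> C p" "w \<in> C q"
    moreover have "inner (b - u) (a - x) \<ge> 0" if "b \<in> B a" for a b
      using u[OF that] by (metis inner_minus_left inner_minus_right minus_diff_eq minus_minus)
    ultimately show "inner (v - w) (p - q) \<ge> 0"
      using u maximal_monotoneD[OF mm] unfolding C_def by (auto split: if_splits)
  qed
  moreover have "\<forall>y. B y \<subseteq> C y" unfolding C_def by auto
  ultimately have "C = B" using mm unfolding maximal_monotone_def by blast
  moreover have "u \<in> C x" unfolding C_def by simp
  ultimately show "u \<in> B x" by simp
qed

lemma maximal_monotoneI:
  fixes B :: "'a::real_inner \<Rightarrow> 'a set"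
  assumes "monotone_op B"
    and max: "\<And>x u. (\<And>a b. b \<in> B a \<Longrightarrow> inner (u - b) (x - a) \<ge> 0) \<Longrightarrow> u \<in> B x"
  shows "maximal_monotone B"
proof -
  have "C x \<subseteq> B x" if "monotone_op C" and sub: "\<forall>x. B x \<subseteq> C x" for C x
  proof
    fix u assume "u \<in> C x"
    show "u \<in> B x"
    proof (rule max)
      fix a b assume "b \<in> B a"
      then show "inner (u - b) (x - a) \<ge> 0"
        using \<open>monotone_op C\<close> sub \<open>u \<in> C x\<close> unfolding monotone_op_def by blast
    qed
  qed
  with \<open>monotone_op B\<close> show ?thesis unfolding maximal_monotone_def by blast
qed

lemma maximal_monotone_graph_nonempty:
  fixes B :: "'a::real_inner \<Rightarrow> 'a set"
  assumes "maximal_monotone B"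
  obtains a b where "b \<in> B a"
  using maximal_monotone_memI[OF assms, of 0 0] by blast

lemma maximal_monotone_graph_closed:
  fixes B :: "'a::real_inner \<Rightarrow> 'a set"
  assumes mm: "maximal_monotone B" and mem: "\<And>n. v n \<in> B (y n)"
    and "y \<longlonglongrightarrow> x" and "v \<longlonglongrightarrow> u"
  shows "u \<in> B x"
proof (rule maximal_monotone_memI[OF mm])
  fix a b assume "b \<in> B a"
  have "(\<lambda>n. inner (v n - b) (y n - a)) \<longlonglongrightarrow> inner (u - b) (x - a)"
    by (intro tendsto_intros assms)
  moreover have "\<And>n. inner (v n - b) (y n - a) \<ge> 0"
    using maximal_monotoneD[OF mm mem \<open>b \<in> B a\<close>] .
  ultimately show "inner (u - b) (x - a) \<ge> 0"
    by (intro LIMSEQ_le_const) auto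
qed

section \<open>Minty's theorem\<close>

text \<open>\<open>fitzpatrick_epigraph B x u t\<close> says \<open>F\<^sub>B(x, u) \<le> t\<close> for the Fitzpatrick function
\<open>F\<^sub>B(x, u) = sup {\<langle>x, b\<rangle> + \<langle>a, u\<rangle> - \<langle>a, b\<rangle> | b \<in> B a}\<close>, which may be infinite.\<close>

definition fitzpatrick_epigraph :: "('a::real_inner \<Rightarrow> 'a set) \<Rightarrow> 'a \<Rightarrow> 'a \<Rightarrow> real \<Rightarrow> bool" where
  "fitzpatrick_epigraph B x u t \<longleftrightarrow> (\<forall>a b. b \<in> B a \<longrightarrow> inner x b + inner a u - inner a b \<le> t)"

lemma fitzpatrick_epigraph_graph:
  assumes "monotone_op B" and "u \<in> B x"
  shows "fitzpatrick_epigraph B x u (inner x u)"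
  unfolding fitzpatrick_epigraph_def
proof (intro allI impI)
  fix a b assume "b \<in> B a"
  with assms have "inner (u - b) (x - a) \<ge> 0" unfolding monotone_op_def by blast
  then show "inner x b + inner a u - inner a b \<le> inner x u"
    by (simp add: inner_diff_left inner_diff_right inner_commute)
qed

lemma fitzpatrick_epigraph_inner_le:
  assumes mm: "maximal_monotone B" and epi: "fitzpatrick_epigraph B x u t"
  shows "inner x u \<le> t"
proof (cases "u \<in> B x")
  case True
  then show ?thesis using epi unfolding fitzpatrick_epigraph_def by fastforce
next
  case False
  then obtain a b where "b \<in> B a" and neg: "inner (u - b) (x - a) < 0"
    using maximal_monotone_memI[OF mm] by (meson not_le)
  then have "inner x b + inner a u - inner a b \<le> t"
    using epi unfolding fitzpatrick_epigraph_def by blast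
  moreover have "inner x b + inner a u - inner a b = inner x u - inner (u - b) (x - a)"
    by (simp add: inner_diff_left inner_diff_right inner_commute)
  ultimately show ?thesis using neg by linarith
qed

lemma fitzpatrick_epigraph_convex:
  assumes "fitzpatrick_epigraph B x u t" and "fitzpatrick_epigraph B x' u' t'"
    and "0 \<le> l" and "l \<le> 1"
  shows "fitzpatrick_epigraph B ((1 - l) *\<^sub>R x + l *\<^sub>R x') ((1 - l) *\<^sub>R u + l *\<^sub>R u') ((1 - l) * t + l * t')"
  unfolding fitzpatrick_epigraph_def
proof (intro allI impI)
  fix a b assume "b \<in> B a"
  have "inner ((1 - l) *\<^sub>R x + l *\<^sub>R x') b + inner a ((1 - l) *\<^sub>R u + l *\<^sub>R u') - inner a b
      = (1 - l) * (inner x b + inner a u - inner a b) + l * (inner x' b + inner a u' - inner a b)"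
    by (simp add: inner_add_left inner_add_right algebra_simps)
  also have "\<dots> \<le> (1 - l) * t + l * t'"
    using assms \<open>b \<in> B a\<close> unfolding fitzpatrick_epigraph_def by (intro add_mono mult_left_mono) auto
  finally show "inner ((1 - l) *\<^sub>R x + l *\<^sub>R x') b + inner a ((1 - l) *\<^sub>R u + l *\<^sub>R u') - inner a b
      \<le> (1 - l) * t + l * t'" .
qed

lemma fitzpatrick_epigraph_limit:
  assumes epi: "\<And>n. fitzpatrick_epigraph B (X n) (U n) (S n)"
    and "X \<longlonglongrightarrow> x" and "U \<longlonglongrightarrow> u" and "S \<longlonglongrightarrow> t"
  shows "fitzpatrick_epigraph B x u t"
  unfolding fitzpatrick_epigraph_def
proof (intro allI impI)
  fix a b assume "b \<in> B a"
  have "(\<lambda>n. inner (X n) b + inner a (U n) - inner a b) \<longlonglongrightarrow> inner x b + inner a u - inner a b"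
    by (intro tendsto_intros assms)
  then show "inner x b + inner a u - inner a b \<le> t"
    by (rule LIMSEQ_le[OF _ \<open>S \<longlonglongrightarrow> t\<close>])
      (use epi \<open>b \<in> B a\<close> in \<open>auto simp: fitzpatrick_epigraph_def\<close>)
qed

lemma fitzpatrick_energy_nonneg:
  assumes "maximal_monotone B" and "fitzpatrick_epigraph B x u t"
  shows "0 \<le> t + (norm x)\<^sup>2 / 2 + (norm u)\<^sup>2 / 2"
proof -
  have "0 \<le> (norm (x + u))\<^sup>2 / 2" by simp
  also have "\<dots> = inner x u + (norm x)\<^sup>2 / 2 + (norm u)\<^sup>2 / 2"
    unfolding power2_norm_eq_inner by (simp add: inner_add_left inner_add_right inner_commute)
  also have "\<dots> \<le> t + (norm x)\<^sup>2 / 2 + (norm u)\<^sup>2 / 2"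
    using fitzpatrick_epigraph_inner_le[OF assms] by simp
  finally show ?thesis .
qed

lemma fitzpatrick_minimizing_sequence_Cauchy:
  fixes X U :: "nat \<Rightarrow> 'a::real_inner"
  assumes epi: "\<And>n. fitzpatrick_epigraph B (X n) (U n) (S n)"
    and m_le: "\<And>x u t. fitzpatrick_epigraph B x u t \<Longrightarrow> m \<le> t + (norm x)\<^sup>2 / 2 + (norm u)\<^sup>2 / 2"
    and min: "\<And>n. S n + (norm (X n))\<^sup>2 / 2 + (norm (U n))\<^sup>2 / 2 < m + \<epsilon> n"
    and "\<epsilon> \<longlonglongrightarrow> 0"
  shows "Cauchy X" and "Cauchy U"
proof -
  have est: "(norm (X n - X k))\<^sup>2 + (norm (U n - U k))\<^sup>2 \<le> 4 * \<epsilon> n + 4 * \<epsilon> k" for n k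
  proof -
    have "fitzpatrick_epigraph B ((1/2) *\<^sub>R (X n + X k)) ((1/2) *\<^sub>R (U n + U k)) (S n / 2 + S k / 2)"
      using fitzpatrick_epigraph_convex[OF epi epi, of "1/2" n k] by (simp add: scaleR_add_right)
    from m_le[OF this] show ?thesis
      using parallelogram_law_midpoint[of "X n" "X k" 0, unfolded diff_0 norm_minus_cancel]
        parallelogram_law_midpoint[of "U n" "U k" 0, unfolded diff_0 norm_minus_cancel]
        min[of n] min[of k] by linarith
  qed
  have eps: "(\<lambda>n. 4 * \<epsilon> n) \<longlonglongrightarrow> 0"
    by (rule tendsto_mult_right_zero) fact
  show "Cauchy X"
  proof (rule Cauchy_if_norm_diff_sq_le[OF eps])
    show "(norm (X n - X k))\<^sup>2 \<le> 4 * \<epsilon> n + 4 * \<epsilon> k" for n k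
      using est[of n k] zero_le_power2[of "norm (U n - U k)"] by linarith
  qed
  show "Cauchy U"
  proof (rule Cauchy_if_norm_diff_sq_le[OF eps])
    show "(norm (U n - U k))\<^sup>2 \<le> 4 * \<epsilon> n + 4 * \<epsilon> k" for n k
      using est[of n k] zero_le_power2[of "norm (X n - X k)"] by linarith
  qed
qed

lemma fitzpatrick_minimizing_sequence_limit:
  fixes X U :: "nat \<Rightarrow> 'a::real_inner"
  assumes epi: "\<And>n. fitzpatrick_epigraph B (X n) (U n) (S n)"
    and m_le: "\<And>x u t. fitzpatrick_epigraph B x u t \<Longrightarrow> m \<le> t + (norm x)\<^sup>2 / 2 + (norm u)\<^sup>2 / 2"
    and min: "\<And>n. S n + (norm (X n))\<^sup>2 / 2 + (norm (U n))\<^sup>2 / 2 < m + \<epsilon> n"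
    and "\<epsilon> \<longlonglongrightarrow> 0" and "X \<longlonglongrightarrow> x" and "U \<longlonglongrightarrow> u"
  shows "fitzpatrick_epigraph B x u (m - (norm x)\<^sup>2 / 2 - (norm u)\<^sup>2 / 2)"
proof -
  have "(\<lambda>n. S n + (norm (X n))\<^sup>2 / 2 + (norm (U n))\<^sup>2 / 2) \<longlonglongrightarrow> m"
  proof (rule real_tendsto_sandwich)
    show "\<forall>\<^sub>F n in sequentially. m \<le> S n + (norm (X n))\<^sup>2 / 2 + (norm (U n))\<^sup>2 / 2"
      using m_le[OF epi] by simp
    show "\<forall>\<^sub>F n in sequentially. S n + (norm (X n))\<^sup>2 / 2 + (norm (U n))\<^sup>2 / 2 \<le> m + \<epsilon> n"
      using min by (simp add: less_imp_le)
    show "(\<lambda>n. m + \<epsilon> n) \<longlonglongrightarrow> m"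
      using tendsto_add[OF tendsto_const \<open>\<epsilon> \<longlonglongrightarrow> 0\<close>, of m] by simp
  qed simp
  then have "(\<lambda>n. (S n + (norm (X n))\<^sup>2 / 2 + (norm (U n))\<^sup>2 / 2) - (norm (X n))\<^sup>2 / 2 - (norm (U n))\<^sup>2 / 2)
      \<longlonglongrightarrow> m - (norm x)\<^sup>2 / 2 - (norm u)\<^sup>2 / 2"
    by (intro tendsto_intros \<open>X \<longlonglongrightarrow> x\<close> \<open>U \<longlonglongrightarrow> u\<close>) simp_all
  then have "S \<longlonglongrightarrow> m - (norm x)\<^sup>2 / 2 - (norm u)\<^sup>2 / 2" by simp
  with epi \<open>X \<longlonglongrightarrow> x\<close> \<open>U \<longlonglongrightarrow> u\<close> show ?thesis by (rule fitzpatrick_epigraph_limit)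
qed

lemma fitzpatrick_energy_minimizer:
  fixes B :: "'a::{real_inner,complete_space} \<Rightarrow> 'a set"
  assumes mm: "maximal_monotone B"
  obtains x u t where "fitzpatrick_epigraph B x u t"
    and "\<And>x' u' t'. fitzpatrick_epigraph B x' u' t' \<Longrightarrow>
      t + (norm x)\<^sup>2 / 2 + (norm u)\<^sup>2 / 2 \<le> t' + (norm x')\<^sup>2 / 2 + (norm u')\<^sup>2 / 2"
proof -
  define E where "E = {(x, u, t). fitzpatrick_epigraph B x u t}"
  define g where "g = (\<lambda>(x::'a, u::'a, t). t + (norm x)\<^sup>2 / 2 + (norm u)\<^sup>2 / 2)"
  define m where "m = (INF e\<in>E. g e)"
  have bdd: "bdd_below (g ` E)"
    using fitzpatrick_energy_nonneg[OF mm] by (intro bdd_belowI2[of _ 0]) (auto simp: E_def g_def)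
  have m_le: "m \<le> t + (norm x)\<^sup>2 / 2 + (norm u)\<^sup>2 / 2" if "fitzpatrick_epigraph B x u t" for x u t
    using cINF_lower[OF bdd, of "(x, u, t)"] that by (simp add: m_def E_def g_def)
  obtain a b where "b \<in> B a" using maximal_monotone_graph_nonempty[OF mm] .
  then have "(a, b, inner a b) \<in> E"
    using mm fitzpatrick_epigraph_graph unfolding E_def maximal_monotone_def by blast
  then obtain s where sE: "\<And>n. s n \<in> E" and s_min: "\<And>n. g (s n) < m + inverse (real (Suc n))"
    using obtain_minimizing_sequence[OF _ bdd] unfolding m_def by blast
  have "\<exists>x u t. fitzpatrick_epigraph B x u t \<and>
      t + (norm x)\<^sup>2 / 2 + (norm u)\<^sup>2 / 2 < m + inverse (real (Suc n))" for n
    using sE[of n] s_min[of n] by (cases "s n") (force simp: E_def g_def)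
  then obtain X U S where epi: "\<And>n. fitzpatrick_epigraph B (X n) (U n) (S n)"
    and min: "\<And>n. S n + (norm (X n))\<^sup>2 / 2 + (norm (U n))\<^sup>2 / 2 < m + inverse (real (Suc n))"
    by metis
  obtain x u where "X \<longlonglongrightarrow> x" "U \<longlonglongrightarrow> u"
    using fitzpatrick_minimizing_sequence_Cauchy[OF epi m_le min LIMSEQ_inverse_real_of_nat]
    by (meson Cauchy_convergent convergent_def)
  then have "fitzpatrick_epigraph B x u (m - (norm x)\<^sup>2 / 2 - (norm u)\<^sup>2 / 2)"
    using fitzpatrick_minimizing_sequence_limit[OF epi m_le min LIMSEQ_inverse_real_of_nat] by blast
  with m_le show ?thesis using that by force
qed

lemma fitzpatrick_minimizer_inner_ge:
  fixes B :: "'a::real_inner \<Rightarrow> 'a set"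
  assumes mm: "maximal_monotone B" and epi: "fitzpatrick_epigraph B x u t"
    and min: "\<And>x' u' t'. fitzpatrick_epigraph B x' u' t' \<Longrightarrow>
      t + (norm x)\<^sup>2 / 2 + (norm u)\<^sup>2 / 2 \<le> t' + (norm x')\<^sup>2 / 2 + (norm u')\<^sup>2 / 2"
    and "b \<in> B a"
  shows "(norm (x + u))\<^sup>2 \<le> inner (a + u) (b + x)"
proof -
  define K where "K = ((norm (a - x))\<^sup>2 + (norm (b - u))\<^sup>2) / 2"
  have "t \<le> inner a b + inner x (a - x) + inner u (b - u)"
  proof (rule le_if_le_add_small_multiple)
    show "K \<ge> 0" unfolding K_def by simp
    fix l :: real assume "0 < l" "l \<le> 1"
    have "fitzpatrick_epigraph B ((1 - l) *\<^sub>R x + l *\<^sub>R a) ((1 - l) *\<^sub>R u + l *\<^sub>R b) ((1 - l) * t + l * inner a b)"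
      using \<open>0 < l\<close> \<open>l \<le> 1\<close> mm \<open>b \<in> B a\<close>
      by (intro fitzpatrick_epigraph_convex[OF epi] fitzpatrick_epigraph_graph)
        (auto simp: maximal_monotone_def)
    from min[OF this] have "t + (norm x)\<^sup>2 / 2 + (norm u)\<^sup>2 / 2
        \<le> (1 - l) * t + l * inner a b + (norm (x + l *\<^sub>R (a - x)))\<^sup>2 / 2 + (norm (u + l *\<^sub>R (b - u)))\<^sup>2 / 2"
      by (simp add: algebra_simps)
    then have "l * t \<le> l * (inner a b + inner x (a - x) + inner u (b - u) + l * K)"
      unfolding norm_add_scaleR_sq K_def by (simp add: field_simps power2_eq_square dot_square_norm)
    then show "t \<le> inner a b + inner x (a - x) + inner u (b - u) + l * K"
      using \<open>0 < l\<close> by simp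
  qed
  moreover have "inner x u \<le> t" by (rule fitzpatrick_epigraph_inner_le[OF mm epi])
  moreover have "inner (a + u) (b + x) - (norm (x + u))\<^sup>2
      = inner a b + inner x (a - x) + inner u (b - u) - inner x u"
    unfolding power2_norm_eq_inner
    by (simp add: inner_add_left inner_add_right inner_diff_left inner_diff_right inner_commute)
  ultimately show ?thesis by linarith
qed

theorem minty_exists_neg_mem:
  fixes B :: "'a::{real_inner,complete_space} \<Rightarrow> 'a set"
  assumes mm: "maximal_monotone B"
  shows "\<exists>p. - p \<in> B p"
proof -
  obtain x u t where epi: "fitzpatrick_epigraph B x u t"
    and min: "\<And>x' u' t'. fitzpatrick_epigraph B x' u' t' \<Longrightarrow>
      t + (norm x)\<^sup>2 / 2 + (norm u)\<^sup>2 / 2 \<le> t' + (norm x')\<^sup>2 / 2 + (norm u')\<^sup>2 / 2"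
    using fitzpatrick_energy_minimizer[OF mm] by blast
  have ineq: "(norm (x + u))\<^sup>2 \<le> inner (a + u) (b + x)" if "b \<in> B a" for a b
    using mm epi min that by (rule fitzpatrick_minimizer_inner_ge)
  have "- x \<in> B (- u)"
  proof (rule maximal_monotone_memI[OF mm])
    fix a b assume "b \<in> B a"
    have "0 \<le> (norm (x + u))\<^sup>2" by simp
    also have "\<dots> \<le> inner (a + u) (b + x)" by (rule ineq) fact
    also have "\<dots> = inner (- x - b) (- u - a)"
      by (simp add: inner_add_left inner_add_right inner_diff_left inner_diff_right inner_commute)
    finally show "inner (- x - b) (- u - a) \<ge> 0" .
  qed
  moreover from ineq[OF this] have "x + u = 0" by simp
  ultimately show ?thesis by (metis add.inverse_inverse neg_eq_iff_add_eq_0)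
qed

section \<open>Resolvents\<close>

lemma maximal_monotone_shift_scale:
  fixes B :: "'a::real_inner \<Rightarrow> 'a set"
  assumes mm: "maximal_monotone B" and "\<gamma> > 0"
  shows "maximal_monotone (\<lambda>y. (\<lambda>b. \<gamma> *\<^sub>R b) ` B (y + z))"
proof (rule maximal_monotoneI)
  show "monotone_op (\<lambda>y. (\<lambda>b. \<gamma> *\<^sub>R b) ` B (y + z))"
    unfolding monotone_op_def
  proof (intro allI impI)
    fix x y v w assume "v \<in> (\<lambda>b. \<gamma> *\<^sub>R b) ` B (x + z)" "w \<in> (\<lambda>b. \<gamma> *\<^sub>R b) ` B (y + z)"
    then obtain c c' where "c \<in> B (x + z)" "v = \<gamma> *\<^sub>R c" "c' \<in> B (y + z)" "w = \<gamma> *\<^sub>R c'" by blast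
    moreover from this have "inner (c - c') ((x + z) - (y + z)) \<ge> 0"
      using maximal_monotoneD[OF mm] by blast
    ultimately show "inner (v - w) (x - y) \<ge> 0"
      using \<open>\<gamma> > 0\<close> by (simp flip: scaleR_diff_right)
  qed
next
  fix x u
  assume u: "\<And>a b. b \<in> (\<lambda>b. \<gamma> *\<^sub>R b) ` B (a + z) \<Longrightarrow> inner (u - b) (x - a) \<ge> 0"
  have "(1 / \<gamma>) *\<^sub>R u \<in> B (x + z)"
  proof (rule maximal_monotone_memI[OF mm])
    fix a b assume "b \<in> B a"
    then have "\<gamma> *\<^sub>R b \<in> (\<lambda>b. \<gamma> *\<^sub>R b) ` B ((a - z) + z)" by auto
    then have "inner (u - \<gamma> *\<^sub>R b) (x - (a - z)) \<ge> 0" by (rule u)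
    also have "inner (u - \<gamma> *\<^sub>R b) (x - (a - z)) = \<gamma> * inner ((1 / \<gamma>) *\<^sub>R u - b) (x + z - a)"
      using \<open>\<gamma> > 0\<close> by (simp add: inner_diff_left inner_diff_right algebra_simps)
    finally show "inner ((1 / \<gamma>) *\<^sub>R u - b) (x + z - a) \<ge> 0"
      using \<open>\<gamma> > 0\<close> by (simp add: zero_le_mult_iff)
  qed
  then have "\<gamma> *\<^sub>R ((1 / \<gamma>) *\<^sub>R u) \<in> (\<lambda>b. \<gamma> *\<^sub>R b) ` B (x + z)" by blast
  then show "u \<in> (\<lambda>b. \<gamma> *\<^sub>R b) ` B (x + z)" using \<open>\<gamma> > 0\<close> by simp
qed

lemma resolvent_exists:
  fixes B :: "'a::{real_inner,complete_space} \<Rightarrow> 'a set"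
  assumes "maximal_monotone B" and "\<gamma> > 0"
  shows "\<exists>x. (1 / \<gamma>) *\<^sub>R (z - x) \<in> B x"
proof -
  obtain p where "- p \<in> (\<lambda>b. \<gamma> *\<^sub>R b) ` B (p + z)"
    using minty_exists_neg_mem[OF maximal_monotone_shift_scale[OF assms]] by blast
  then obtain b where "b \<in> B (p + z)" "- p = \<gamma> *\<^sub>R b" by blast
  moreover from this have "(1 / \<gamma>) *\<^sub>R (z - (p + z)) = b" using \<open>\<gamma> > 0\<close> by simp
  ultimately show ?thesis by metis
qed

lemma resolvent_unique:
  fixes B :: "'a::real_inner \<Rightarrow> 'a set"
  assumes mm: "maximal_monotone B" and "\<gamma> > 0"
    and "(1 / \<gamma>) *\<^sub>R (z - x) \<in> B x" and "(1 / \<gamma>) *\<^sub>R (z - x') \<in> B x'"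
  shows "x = x'"
proof -
  have eq: "(1 / \<gamma>) *\<^sub>R (z - x) - (1 / \<gamma>) *\<^sub>R (z - x') = - ((1 / \<gamma>) *\<^sub>R (x - x'))"
    by (simp add: algebra_simps)
  have "0 \<le> inner ((1 / \<gamma>) *\<^sub>R (z - x) - (1 / \<gamma>) *\<^sub>R (z - x')) (x - x')"
    using maximal_monotoneD[OF mm assms(3,4)] .
  also have "\<dots> = - (norm (x - x'))\<^sup>2 / \<gamma>"
    unfolding eq by (simp add: power2_norm_eq_inner)
  finally have "(norm (x - x'))\<^sup>2 \<le> 0"
    using \<open>\<gamma> > 0\<close> by (simp add: divide_le_0_iff)
  then show "x = x'" by simp
qed

lemma resolvent_mem:
  fixes B :: "'a::{real_inner,complete_space} \<Rightarrow> 'a set"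
  assumes mm: "maximal_monotone B" and "\<gamma> > 0"
  shows "(1 / \<gamma>) *\<^sub>R (z - resolvent \<gamma> B z) \<in> B (resolvent \<gamma> B z)"
proof -
  have iff: "z \<in> (\<lambda>b. x + \<gamma> *\<^sub>R b) ` B x \<longleftrightarrow> (1 / \<gamma>) *\<^sub>R (z - x) \<in> B x" for x
  proof
    assume "z \<in> (\<lambda>b. x + \<gamma> *\<^sub>R b) ` B x"
    then show "(1 / \<gamma>) *\<^sub>R (z - x) \<in> B x" using \<open>\<gamma> > 0\<close> by auto
  next
    assume "(1 / \<gamma>) *\<^sub>R (z - x) \<in> B x"
    moreover have "z = x + \<gamma> *\<^sub>R ((1 / \<gamma>) *\<^sub>R (z - x))" using \<open>\<gamma> > 0\<close> by simp
    ultimately show "z \<in> (\<lambda>b. x + \<gamma> *\<^sub>R b) ` B x" by blast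
  qed
  have "\<exists>!x. z \<in> (\<lambda>b. x + \<gamma> *\<^sub>R b) ` B x"
    unfolding iff using resolvent_exists[OF assms] resolvent_unique[OF assms] by blast
  then have "z \<in> (\<lambda>b. resolvent \<gamma> B z + \<gamma> *\<^sub>R b) ` B (resolvent \<gamma> B z)"
    unfolding resolvent_def by (rule theI')
  then show ?thesis unfolding iff .
qed

lemma resolvent_eqI:
  fixes B :: "'a::{real_inner,complete_space} \<Rightarrow> 'a set"
  assumes "maximal_monotone B" and "\<gamma> > 0" and "(1 / \<gamma>) *\<^sub>R (z - x) \<in> B x"
  shows "resolvent \<gamma> B z = x"
  using resolvent_unique[OF assms(1,2) resolvent_mem[OF assms(1,2)] assms(3)] .

section \<open>Termination of the line search\<close>

definition forward_backward :: "('a::real_vector \<Rightarrow> 'a) \<Rightarrow> ('a \<Rightarrow> 'a set) \<Rightarrow> real \<Rightarrow> 'a \<Rightarrow> 'a" where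
  "forward_backward A B \<alpha> x = resolvent \<alpha> B (x - \<alpha> *\<^sub>R A x)"

definition linesearch_accepts :: "('a::real_inner \<Rightarrow> 'a) \<Rightarrow> real \<Rightarrow> real \<Rightarrow> 'a \<Rightarrow> 'a \<Rightarrow> bool" where
  "linesearch_accepts A2 \<delta> \<alpha> x y \<longleftrightarrow> \<alpha> * inner (A2 x - A2 y) (x - y) \<le> \<delta> * (norm (x - y))\<^sup>2"

lemma uniformly_continuous_on_UNIV_increments:
  fixes f :: "'a::real_normed_vector \<Rightarrow> 'b::real_normed_vector"
  assumes "uniformly_continuous_on UNIV f"
  obtains \<eta> where "\<eta> > 0" and "\<And>n p q. norm (p - q) \<le> real n * \<eta> \<Longrightarrow> norm (f p - f q) \<le> real n"
proof -
  obtain d where "d > 0" and d: "\<And>p q. norm (p - q) < d \<Longrightarrow> norm (f p - f q) < 1"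
    using assms unfolding uniformly_continuous_on_def dist_norm by (metis UNIV_I zero_less_one)
  define \<eta> where "\<eta> = d / 2"
  have "\<eta> > 0" and small: "\<And>p q. norm (p - q) \<le> \<eta> \<Longrightarrow> norm (f p - f q) < 1"
    using \<open>d > 0\<close> d unfolding \<eta>_def by auto
  have "norm (f p - f q) \<le> real n" if "norm (p - q) \<le> real n * \<eta>" for n p q
    using that
  proof (induction n arbitrary: p)
    case 0
    then show ?case by simp
  next
    case (Suc n)
    show ?case
    proof (cases "norm (p - q) \<le> \<eta>")
      case True
      then show ?thesis using small[of p q] by simp
    next
      case False
      define r where "r = p + (\<eta> / norm (p - q)) *\<^sub>R (q - p)"
      have "norm (p - q) > 0" using False \<open>\<eta> > 0\<close> by linarith
      then have "norm (p - r) = \<eta>"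
        using \<open>\<eta> > 0\<close> by (simp add: r_def norm_minus_commute)
      then have "norm (f p - f r) < 1" using small by simp
      have "\<eta> / norm (p - q) \<le> 1" using False \<open>norm (p - q) > 0\<close> by (simp add: divide_le_eq)
      have "r - q = (1 - \<eta> / norm (p - q)) *\<^sub>R (p - q)" by (simp add: r_def algebra_simps)
      then have "norm (r - q) = (1 - \<eta> / norm (p - q)) * norm (p - q)"
        using \<open>\<eta> / norm (p - q) \<le> 1\<close> by simp
      also have "\<dots> = norm (p - q) - \<eta>" using \<open>norm (p - q) > 0\<close> by (simp add: field_simps)
      finally have "norm (r - q) = norm (p - q) - \<eta>" .
      then have "norm (f r - f q) \<le> real n" using Suc by (intro Suc.IH) (simp add: algebra_simps)
      with \<open>norm (f p - f r) < 1\<close> show ?thesis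
        using norm_triangle_ineq[of "f p - f r" "f r - f q"] by simp
    qed
  qed
  with \<open>\<eta> > 0\<close> show ?thesis using that by blast
qed

lemma uniformly_continuous_on_UNIV_affine_bound:
  fixes f :: "'a::real_normed_vector \<Rightarrow> 'b::real_normed_vector"
  assumes "uniformly_continuous_on UNIV f"
  obtains C where "C > 0" and "\<And>p q. norm (f p - f q) \<le> C * (1 + norm (p - q))"
proof -
  obtain \<eta> where "\<eta> > 0" and incr: "\<And>n p q. norm (p - q) \<le> real n * \<eta> \<Longrightarrow> norm (f p - f q) \<le> real n"
    using uniformly_continuous_on_UNIV_increments[OF assms] by blast
  have "norm (f p - f q) \<le> max 1 (1 / \<eta>) * (1 + norm (p - q))" for p q
  proof -
    define n where "n = nat \<lceil>norm (p - q) / \<eta>\<rceil>"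
    have n: "real n = of_int \<lceil>norm (p - q) / \<eta>\<rceil>"
      unfolding n_def using \<open>\<eta> > 0\<close> by simp
    have "norm (p - q) / \<eta> \<le> real n" unfolding n by (rule le_of_int_ceiling)
    then have "norm (f p - f q) \<le> real n" using \<open>\<eta> > 0\<close> by (intro incr) (simp add: field_simps)
    also have "\<dots> \<le> 1 + norm (p - q) / \<eta>" unfolding n using ceiling_correct[of "norm (p - q) / \<eta>"] by linarith
    also have "\<dots> \<le> max 1 (1 / \<eta>) * (1 + norm (p - q))"
    proof -
      have "norm (p - q) / \<eta> = (1 / \<eta>) * norm (p - q)" by simp
      also have "\<dots> \<le> max 1 (1 / \<eta>) * norm (p - q)" by (intro mult_right_mono) auto
      finally show ?thesis unfolding distrib_left using max.cobounded1[of 1 "1 / \<eta>"] by linarith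
    qed
    finally show ?thesis .
  qed
  then show ?thesis using that[of "max 1 (1 / \<eta>)"] by simp
qed

lemma LIMSEQ_zero_if_le_vanishing_affine:
  fixes d \<gamma> :: "nat \<Rightarrow> real"
  assumes "\<gamma> \<longlonglongrightarrow> 0" and "C > 0" and "\<delta> > 0" and "\<And>j. d j \<ge> 0"
    and "\<And>j. \<delta> * d j \<le> \<gamma> j * (C * (1 + d j))"
  shows "d \<longlonglongrightarrow> 0"
proof (rule real_tendsto_sandwich[where f = "\<lambda>j. 0" and h = "\<lambda>j. (2 * C / \<delta>) * \<gamma> j"])
  have "\<forall>\<^sub>F j in sequentially. \<gamma> j * C < \<delta> / 2"
    by (rule order_tendstoD(2)[OF tendsto_mult_left_zero[OF \<open>\<gamma> \<longlonglongrightarrow> 0\<close>]]) (simp add: \<open>\<delta> > 0\<close>)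
  then show "\<forall>\<^sub>F j in sequentially. d j \<le> (2 * C / \<delta>) * \<gamma> j"
  proof (rule eventually_mono)
    fix j assume "\<gamma> j * C < \<delta> / 2"
    then have "\<gamma> j * C * d j \<le> \<delta> / 2 * d j" using assms(4) by (intro mult_right_mono) auto
    then have "\<delta> * d j \<le> \<gamma> j * C + \<delta> / 2 * d j" using assms(5)[of j] by (simp add: algebra_simps)
    then show "d j \<le> (2 * C / \<delta>) * \<gamma> j" using \<open>\<delta> > 0\<close> by (simp add: field_simps)
  qed
  show "(\<lambda>j. (2 * C / \<delta>) * \<gamma> j) \<longlonglongrightarrow> 0" by (rule tendsto_mult_right_zero) fact
qed (use assms(4) in auto)

lemma forward_backward_mem:
  fixes B :: "'a::{real_inner,complete_space} \<Rightarrow> 'a set"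
  assumes "maximal_monotone B" and "\<alpha> > 0"
  shows "(1 / \<alpha>) *\<^sub>R (x - forward_backward A B \<alpha> x) - A x \<in> B (forward_backward A B \<alpha> x)"
proof -
  have "(1 / \<alpha>) *\<^sub>R ((x - \<alpha> *\<^sub>R A x) - forward_backward A B \<alpha> x) \<in> B (forward_backward A B \<alpha> x)"
    unfolding forward_backward_def by (rule resolvent_mem[OF assms])
  moreover have "(1 / \<alpha>) *\<^sub>R ((x - \<alpha> *\<^sub>R A x) - y) = (1 / \<alpha>) *\<^sub>R (x - y) - A x" for y
    using \<open>\<alpha> > 0\<close> by (simp add: algebra_simps)
  ultimately show ?thesis by simp
qed

lemma forward_backward_zero:
  fixes B :: "'a::{real_inner,complete_space} \<Rightarrow> 'a set"
  assumes "maximal_monotone B" and "\<alpha> > 0" and "- A x \<in> B x"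
  shows "forward_backward A B \<alpha> x = x"
  unfolding forward_backward_def using assms by (intro resolvent_eqI) simp_all

lemma linesearch_rejects:
  assumes "\<not> linesearch_accepts A2 \<delta> \<gamma> x y" and "\<gamma> \<ge> 0"
  shows "x \<noteq> y" and "\<delta> * norm (x - y) < \<gamma> * norm (A2 x - A2 y)"
proof -
  have "\<delta> * (norm (x - y))\<^sup>2 < \<gamma> * inner (A2 x - A2 y) (x - y)"
    using assms(1) unfolding linesearch_accepts_def by simp
  also have "\<dots> \<le> \<gamma> * (norm (A2 x - A2 y) * norm (x - y))"
    using \<open>\<gamma> \<ge> 0\<close> by (intro mult_left_mono norm_cauchy_schwarz)
  finally have "norm (x - y) * (\<delta> * norm (x - y)) < norm (x - y) * (\<gamma> * norm (A2 x - A2 y))"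
    by (simp add: power2_eq_square algebra_simps)
  then show "x \<noteq> y" and "\<delta> * norm (x - y) < \<gamma> * norm (A2 x - A2 y)"
    by (auto simp: mult_less_cancel_left)
qed

lemma linesearch_rejected_limits:
  fixes A2 :: "'a::real_inner \<Rightarrow> 'a"
  assumes uc: "uniformly_continuous_on UNIV A2"
    and "\<gamma> \<longlonglongrightarrow> 0" and \<gamma>_pos: "\<And>j. \<gamma> j > 0" and "\<delta> > 0"
    and rej: "\<And>j. \<not> linesearch_accepts A2 \<delta> (\<gamma> j) x (y j)"
  shows "y \<longlonglongrightarrow> x" and "(\<lambda>j. (1 / \<gamma> j) *\<^sub>R (x - y j)) \<longlonglongrightarrow> 0"
proof -
  note bound = linesearch_rejects(2)[OF rej less_imp_le[OF \<gamma>_pos]]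
  obtain C where "C > 0" and C: "\<And>p q. norm (A2 p - A2 q) \<le> C * (1 + norm (p - q))"
    using uniformly_continuous_on_UNIV_affine_bound[OF uc] by blast
  have "(\<lambda>j. norm (x - y j)) \<longlonglongrightarrow> 0"
  proof (rule LIMSEQ_zero_if_le_vanishing_affine[OF \<open>\<gamma> \<longlonglongrightarrow> 0\<close> \<open>C > 0\<close> \<open>\<delta> > 0\<close>])
    show "\<delta> * norm (x - y j) \<le> \<gamma> j * (C * (1 + norm (x - y j)))" for j
      using bound[of j] mult_left_mono[OF C[of x "y j"] less_imp_le[OF \<gamma>_pos[of j]]] by linarith
  qed simp
  then have "(\<lambda>j. x - (x - y j)) \<longlonglongrightarrow> x - 0"
    by (intro tendsto_diff tendsto_const) (simp add: tendsto_norm_zero_iff)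
  then show "y \<longlonglongrightarrow> x" by simp
  moreover have "isCont A2 x"
    using uniformly_continuous_imp_continuous[OF uc] by (simp add: continuous_on_eq_continuous_at)
  ultimately have "(\<lambda>j. A2 (y j)) \<longlonglongrightarrow> A2 x" by (rule isCont_tendsto_compose[rotated])
  then have "(\<lambda>j. A2 x - A2 (y j)) \<longlonglongrightarrow> 0"
    using tendsto_diff[OF tendsto_const[of "A2 x"]] by fastforce
  then have "(\<lambda>j. norm (A2 x - A2 (y j)) / \<delta>) \<longlonglongrightarrow> 0"
    by (intro tendsto_divide_zero tendsto_norm_zero)
  moreover have "norm ((1 / \<gamma> j) *\<^sub>R (x - y j)) \<le> norm (A2 x - A2 (y j)) / \<delta>" for j
  proof -
    have "norm ((1 / \<gamma> j) *\<^sub>R (x - y j)) = norm (x - y j) / \<gamma> j" using \<gamma>_pos[of j] by simp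
    also have "\<dots> \<le> norm (A2 x - A2 (y j)) / \<delta>"
      using bound[of j] \<gamma>_pos[of j] \<open>\<delta> > 0\<close> by (simp add: divide_simps mult.commute less_imp_le)
    finally show ?thesis .
  qed
  ultimately show "(\<lambda>j. (1 / \<gamma> j) *\<^sub>R (x - y j)) \<longlonglongrightarrow> 0"
    by (metis (no_types, lifting) Lim_null_comparison always_eventually)
qed

lemma linesearch_terminates:
  fixes A A2 :: "'a::{real_inner,complete_space} \<Rightarrow> 'a" and B :: "'a \<Rightarrow> 'a set"
  assumes mm: "maximal_monotone B" and uc: "uniformly_continuous_on UNIV A2"
    and "a > 0" and "0 < \<theta>" and "\<theta> < 1" and "\<delta> > 0"
  shows "\<exists>j. linesearch_accepts A2 \<delta> (a * \<theta> ^ j) x (forward_backward A B (a * \<theta> ^ j) x)"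
proof (rule ccontr)
  define \<gamma> y where "\<gamma> j = a * \<theta> ^ j" and "y j = forward_backward A B (\<gamma> j) x" for j
  assume "\<not> ?thesis"
  then have rej: "\<not> linesearch_accepts A2 \<delta> (\<gamma> j) x (y j)" for j unfolding \<gamma>_def y_def by blast
  have \<gamma>_pos: "\<gamma> j > 0" for j using \<open>a > 0\<close> \<open>0 < \<theta>\<close> by (simp add: \<gamma>_def)
  have "\<gamma> \<longlonglongrightarrow> 0"
    unfolding \<gamma>_def using \<open>0 < \<theta>\<close> \<open>\<theta> < 1\<close> by (intro tendsto_mult_right_zero LIMSEQ_power_zero) simp_all
  note limits = linesearch_rejected_limits[OF uc this \<gamma>_pos \<open>\<delta> > 0\<close> rej]
  have lim: "(\<lambda>j. (1 / \<gamma> j) *\<^sub>R (x - y j) - A x) \<longlonglongrightarrow> 0 - A x"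
    by (intro tendsto_diff limits(2) tendsto_const)
  have mem: "(1 / \<gamma> j) *\<^sub>R (x - y j) - A x \<in> B (y j)" for j
    unfolding y_def by (rule forward_backward_mem[OF mm \<gamma>_pos])
  from maximal_monotone_graph_closed[OF mm mem limits(1) lim] have "- A x \<in> B x" by simp
  then have "y 0 = x" unfolding y_def by (rule forward_backward_zero[OF mm \<gamma>_pos])
  with linesearch_rejects(1)[OF rej[of 0] less_imp_le[OF \<gamma>_pos[of 0]]] show False by simp
qed

section \<open>Method 2\<close>

definition cut_halfspace :: "('a::real_inner \<Rightarrow> 'a) \<Rightarrow> real \<Rightarrow> real \<Rightarrow> 'a \<Rightarrow> 'a \<Rightarrow> 'a set" where
  "cut_halfspace A2 \<delta>bar \<alpha> x y =
     {z. inner ((1 / \<alpha>) *\<^sub>R (x - y) - (A2 x - A2 y)) (z - y) \<le> \<delta>bar / \<alpha> * (norm (x - y))\<^sup>2}"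

lemma closed_convex_halfspace_le_shifted:
  fixes c w :: "'a::real_inner"
  shows "closed {z. inner c (z - w) \<le> r}" and "convex {z. inner c (z - w) \<le> r}"
proof -
  have eq: "{z. inner c (z - w) \<le> r} = {z. inner c z \<le> r + inner c w}"
    by (auto simp: inner_diff_right)
  show "closed {z. inner c (z - w) \<le> r}" "convex {z. inner c (z - w) \<le> r}"
    unfolding eq by (rule closed_halfspace_le, rule convex_halfspace_le)
qed

lemma solution_in_cut_halfspace:
  fixes A1 A2 :: "'a::{real_inner,complete_space} \<Rightarrow> 'a" and B :: "'a \<Rightarrow> 'a set"
  assumes mm: "maximal_monotone B" and mA2: "maximal_monotone (sv A2)"
    and coc: "cocoercive \<beta> A1" and "\<beta> > 0" and "\<alpha> > 0" and "\<alpha> \<le> 4 * \<beta> * \<delta>bar"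
    and sol: "- (A1 xs + A2 xs) \<in> B xs"
  shows "xs \<in> cut_halfspace A2 \<delta>bar \<alpha> x (forward_backward (\<lambda>z. A1 z + A2 z) B \<alpha> x)"
proof -
  define y where "y = forward_backward (\<lambda>z. A1 z + A2 z) B \<alpha> x"
  define v where "v = (1 / \<alpha>) *\<^sub>R (x - y) - (A1 x + A2 x)"
  define a where "a = A1 x - A1 xs"
  define D t where "D = norm (x - y)" and "t = norm a"
  have "v \<in> B y" unfolding v_def y_def by (rule forward_backward_mem[OF mm \<open>\<alpha> > 0\<close>])
  from maximal_monotoneD[OF mm this sol]
  have mono_B: "inner (v + (A1 xs + A2 xs)) (y - xs) \<ge> 0" by (simp add: algebra_simps)
  have mono_A2: "inner (A2 y - A2 xs) (y - xs) \<ge> 0"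
    using maximal_monotoneD[OF mA2, of "A2 y" y "A2 xs" xs] by (simp add: sv_def)
  have coco: "inner a (x - xs) \<ge> \<beta> * t\<^sup>2"
    using coc unfolding cocoercive_def a_def t_def by blast
  have "inner a (x - y) \<le> t * D" unfolding t_def D_def by (rule norm_cauchy_schwarz)
  moreover have "inner ((1 / \<alpha>) *\<^sub>R (x - y) - (A2 x - A2 y)) (xs - y)
      = - inner (v + (A1 xs + A2 xs)) (y - xs) - inner (A2 y - A2 xs) (y - xs) - inner a (x - xs) + inner a (x - y)"
    unfolding v_def a_def by (simp add: inner_diff_left inner_diff_right inner_add_left algebra_simps)
  ultimately have "inner ((1 / \<alpha>) *\<^sub>R (x - y) - (A2 x - A2 y)) (xs - y) \<le> t * D - \<beta> * t\<^sup>2"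
    using mono_B mono_A2 coco by linarith
  also have "\<dots> \<le> D\<^sup>2 / (4 * \<beta>)"
  proof -
    have "0 \<le> \<beta> * (t - D / (2 * \<beta>))\<^sup>2" using \<open>\<beta> > 0\<close> by simp
    also have "\<dots> = \<beta> * t\<^sup>2 - t * D + D\<^sup>2 / (4 * \<beta>)"
      using \<open>\<beta> > 0\<close> by (simp add: power2_eq_square field_simps)
    finally show ?thesis by simp
  qed
  also have "\<dots> \<le> \<delta>bar / \<alpha> * D\<^sup>2"
  proof -
    have "1 / (4 * \<beta>) \<le> \<delta>bar / \<alpha>"
      using \<open>\<beta> > 0\<close> \<open>\<alpha> > 0\<close> \<open>\<alpha> \<le> 4 * \<beta> * \<delta>bar\<close> by (simp add: field_simps)
    then have "1 / (4 * \<beta>) * D\<^sup>2 \<le> \<delta>bar / \<alpha> * D\<^sup>2" by (rule mult_right_mono) simp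
    then show ?thesis by simp
  qed
  finally show ?thesis unfolding cut_halfspace_def y_def D_def by simp
qed

text \<open>One step of Method 2, from \<open>(x\<^sup>k, \<alpha>\<^sub>k\<^sub>-\<^sub>1)\<close> to \<open>(\<alpha>\<^sub>k, x\<^sup>k\<^sup>+\<^sup>1)\<close>, worded exactly as in the
statement (including the binding of \<open>\<alpha>prev\<close>), so that unfolding it yields the statement.\<close>

definition method2_transition ::
    "('a::real_inner \<Rightarrow> 'a) \<Rightarrow> ('a \<Rightarrow> 'a) \<Rightarrow> ('a \<Rightarrow> 'a set) \<Rightarrow> real \<Rightarrow> real \<Rightarrow> real \<Rightarrow> 'a
      \<Rightarrow> 'a \<Rightarrow> real \<Rightarrow> real \<Rightarrow> 'a \<Rightarrow> bool" where
  "method2_transition A1 A2 B \<theta> \<delta> \<delta>bar x0 x a \<alpha> x' \<longleftrightarrow>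
    (let
      A = (\<lambda>z. A1 z + A2 z);
      \<alpha>prev = a;
      xbj = (\<lambda>j::nat. resolvent (\<alpha>prev * \<theta> ^ j) B (x - (\<alpha>prev * \<theta> ^ j) *\<^sub>R A x));
      cond = (\<lambda>j::nat. \<alpha>prev * \<theta> ^ j * inner (A2 x - A2 (xbj j)) (x - xbj j)
                        \<le> \<delta> * (norm (x - xbj j))\<^sup>2);
      xb = resolvent \<alpha> B (x - \<alpha> *\<^sub>R A x);
      r = \<delta>bar / \<alpha> * (norm (x - xb))\<^sup>2;
      T = {z. inner ((1 / \<alpha>) *\<^sub>R (x - xb) - (A2 x - A2 xb)) (z - xb) \<le> r};
      \<Gamma> = {z. inner (x0 - x) (z - x) \<le> 0}
    in (\<exists>j. cond j) \<and> \<alpha> = \<alpha>prev * \<theta> ^ (LEAST j. cond j) \<and>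
       T \<inter> \<Gamma> \<noteq> {} \<and> is_proj (T \<inter> \<Gamma>) x0 x')"

lemma method2_transition_iff:
  "method2_transition A1 A2 B \<theta> \<delta> \<delta>bar x0 x a \<alpha> x' \<longleftrightarrow>
    (let
      A = (\<lambda>z. A1 z + A2 z);
      accepts = (\<lambda>j. linesearch_accepts A2 \<delta> (a * \<theta> ^ j) x (forward_backward A B (a * \<theta> ^ j) x));
      C = cut_halfspace A2 \<delta>bar \<alpha> x (forward_backward A B \<alpha> x) \<inter> {z. inner (x0 - x) (z - x) \<le> 0}
    in (\<exists>j. accepts j) \<and> \<alpha> = a * \<theta> ^ (LEAST j. accepts j) \<and> C \<noteq> {} \<and> is_proj C x0 x')"
  unfolding method2_transition_def linesearch_accepts_def forward_backward_def cut_halfspace_def Let_def ..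

lemma method2_step:
  fixes A1 A2 :: "'a::{real_inner,complete_space} \<Rightarrow> 'a" and B :: "'a \<Rightarrow> 'a set"
  assumes "\<beta> > 0" and "cocoercive \<beta> A1" and "maximal_monotone (sv A2)"
    and "uniformly_continuous_on UNIV A2" and mm: "maximal_monotone B"
    and sol: "- (A1 xs + A2 xs) \<in> B xs"
    and "0 < \<theta>" and "\<theta> < 1" and "0 < \<delta>"
    and "0 < a" and "a \<le> 4 * \<beta> * \<delta>bar"
    and xs_\<Gamma>: "inner (x0 - x) (xs - x) \<le> 0"
  obtains \<alpha> x' where "method2_transition A1 A2 B \<theta> \<delta> \<delta>bar x0 x a \<alpha> x'"
    and "0 < \<alpha>" and "\<alpha> \<le> a" and "inner (x0 - x') (xs - x') \<le> 0"
proof -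
  define A where "A = (\<lambda>z. A1 z + A2 z)"
  define accepts where "accepts j \<longleftrightarrow> linesearch_accepts A2 \<delta> (a * \<theta> ^ j) x (forward_backward A B (a * \<theta> ^ j) x)"
    for j
  define \<alpha> where "\<alpha> = a * \<theta> ^ (LEAST j. accepts j)"
  define C where "C = cut_halfspace A2 \<delta>bar \<alpha> x (forward_backward A B \<alpha> x) \<inter> {z. inner (x0 - x) (z - x) \<le> 0}"
  have "\<exists>j. accepts j"
    unfolding accepts_def using linesearch_terminates[OF mm] assms by blast
  have "0 < \<alpha>" and "\<alpha> \<le> a"
    unfolding \<alpha>_def using \<open>0 < a\<close> \<open>0 < \<theta>\<close> \<open>\<theta> < 1\<close> by (simp_all add: power_le_one mult_left_le)
  then have "xs \<in> C"
    using solution_in_cut_halfspace[OF mm assms(3,2,1) \<open>0 < \<alpha>\<close> _ sol] \<open>a \<le> 4 * \<beta> * \<delta>bar\<close> xs_\<Gamma>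
    unfolding C_def A_def by simp
  have "closed C" and "convex C"
    unfolding C_def cut_halfspace_def
    by (intro closed_Int convex_Int closed_convex_halfspace_le_shifted)+
  then obtain x' where "is_proj C x0 x'" using is_proj_exists \<open>xs \<in> C\<close> by blast
  moreover from this have "inner (x0 - x') (xs - x') \<le> 0"
    using is_proj_inner_le \<open>convex C\<close> \<open>xs \<in> C\<close> by blast
  moreover have "method2_transition A1 A2 B \<theta> \<delta> \<delta>bar x0 x a \<alpha> x'"
    unfolding method2_transition_iff Let_def A_def[symmetric] accepts_def[symmetric]
      \<alpha>_def[symmetric] C_def[symmetric]
    using \<open>\<exists>j. accepts j\<close> \<open>xs \<in> C\<close> \<open>is_proj C x0 x'\<close> by blast
  ultimately show ?thesis using that \<open>0 < \<alpha>\<close> \<open>\<alpha> \<le> a\<close> by blast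
qed

lemma method2_iterates_exist:
  fixes A1 A2 :: "'a::{real_inner,complete_space} \<Rightarrow> 'a" and B :: "'a \<Rightarrow> 'a set"
  assumes hyps: "\<beta> > 0" "cocoercive \<beta> A1" "maximal_monotone (sv A2)"
      "uniformly_continuous_on UNIV A2" "maximal_monotone B"
    and sol: "- (A1 xs + A2 xs) \<in> B xs"
    and "0 < \<theta>" "\<theta> < 1" "0 < \<delta>" and "\<alpha>m1 > 0" "\<alpha>m1 \<le> 4 * \<beta> * \<delta>bar"
  shows "\<exists>(x :: nat \<Rightarrow> 'a) (\<alpha> :: nat \<Rightarrow> real). x 0 = x0 \<and>
    (\<forall>k. method2_transition A1 A2 B \<theta> \<delta> \<delta>bar x0 (x k) (if k = 0 then \<alpha>m1 else \<alpha> (k - 1)) (\<alpha> k) (x (Suc k)))"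
proof -
  \<comment> \<open>the state is \<open>(x\<^sub>k, \<alpha>\<^sub>k\<^sub>-\<^sub>1)\<close>; the invariant keeps the solution \<open>xs\<close> in \<open>\<Gamma>\<^sub>k\<close>\<close>
  define P where "P n s \<longleftrightarrow> 0 < snd s \<and> snd s \<le> \<alpha>m1 \<and> inner (x0 - fst s) (xs - fst s) \<le> 0
    \<and> (n = 0 \<longrightarrow> s = (x0, \<alpha>m1))" for n :: nat and s :: "'a \<times> real"
  define Q where "Q s s' \<longleftrightarrow> method2_transition A1 A2 B \<theta> \<delta> \<delta>bar x0 (fst s) (snd s) (snd s') (fst s')"
    for s s' :: "'a \<times> real"
  have "\<exists>f. \<forall>n. P n (f n) \<and> Q (f n) (f (Suc n))"
  proof (rule dependent_nat_choice)
    show "\<exists>s. P 0 s" using \<open>\<alpha>m1 > 0\<close> unfolding P_def by auto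
    fix s n assume "P n s"
    then have pos: "0 < snd s" and le: "snd s \<le> \<alpha>m1" and \<Gamma>: "inner (x0 - fst s) (xs - fst s) \<le> 0"
      unfolding P_def by auto
    then have "snd s \<le> 4 * \<beta> * \<delta>bar" using \<open>\<alpha>m1 \<le> 4 * \<beta> * \<delta>bar\<close> by linarith
    then obtain \<alpha> x' where "method2_transition A1 A2 B \<theta> \<delta> \<delta>bar x0 (fst s) (snd s) \<alpha> x'"
        and "0 < \<alpha>" "\<alpha> \<le> snd s" "inner (x0 - x') (xs - x') \<le> 0"
      by (rule method2_step[OF hyps sol \<open>0 < \<theta>\<close> \<open>\<theta> < 1\<close> \<open>0 < \<delta>\<close> pos _ \<Gamma>])
    then show "\<exists>s'. P (Suc n) s' \<and> Q s s'"
      using le by (intro exI[of _ "(x', \<alpha>)"]) (simp add: P_def Q_def)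
  qed
  then obtain f where P: "\<And>n. P n (f n)" and Q: "\<And>n. Q (f n) (f (Suc n))" by blast
  have "(if k = 0 then \<alpha>m1 else snd (f (Suc (k - 1)))) = snd (f k)" for k
    using P[of 0] by (cases k) (simp_all add: P_def)
  then have "method2_transition A1 A2 B \<theta> \<delta> \<delta>bar x0 (fst (f k))
      (if k = 0 then \<alpha>m1 else snd (f (Suc (k - 1)))) (snd (f (Suc k))) (fst (f (Suc k)))" for k
    using Q[of k] by (simp add: Q_def)
  with P[of 0] show ?thesis
    by (intro exI[of _ "\<lambda>k. fst (f k)"] exI[of _ "\<lambda>k. snd (f (Suc k))"]) (simp add: P_def)
qed

theorem corollary4p12:
  fixes A1 A2 :: "'a::{real_inner, complete_space} \<Rightarrow> 'a"
    and B :: "'a \<Rightarrow> 'a set"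
    and \<beta> \<theta> \<delta> \<delta>bar \<alpha>m1 :: real
    and x0 :: 'a
  assumes "\<beta> > 0" and "cocoercive \<beta> A1"
    and "maximal_monotone (sv A2)" and "uniformly_continuous_on UNIV A2"
    and "maximal_monotone B"
    and "\<exists>x. (0::'a) \<in> (\<lambda>b. A1 x + A2 x + b) ` B x"
    and "0 < \<theta>" "\<theta> < 1" "0 < \<delta>" "\<delta> < 1" "\<delta>bar > 0" "1 - \<delta> - \<delta>bar > 0"
    and "\<alpha>m1 > 0" "\<alpha>m1 \<le> 4 * \<beta> * \<delta>bar"
  shows "\<exists>(x :: nat \<Rightarrow> 'a) (\<alpha> :: nat \<Rightarrow> real). x 0 = x0 \<and>
    (\<forall>k. let
        A = (\<lambda>z. A1 z + A2 z);
        \<alpha>prev = (if k = 0 then \<alpha>m1 else \<alpha> (k - 1));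
        xbj = (\<lambda>j::nat. resolvent (\<alpha>prev * \<theta> ^ j) B (x k - (\<alpha>prev * \<theta> ^ j) *\<^sub>R A (x k)));
        cond = (\<lambda>j::nat. \<alpha>prev * \<theta> ^ j * inner (A2 (x k) - A2 (xbj j)) (x k - xbj j)
                          \<le> \<delta> * (norm (x k - xbj j))\<^sup>2);
        xb = resolvent (\<alpha> k) B (x k - \<alpha> k *\<^sub>R A (x k));
        r = \<delta>bar / \<alpha> k * (norm (x k - xb))\<^sup>2;
        T = {z. inner ((1 / \<alpha> k) *\<^sub>R (x k - xb) - (A2 (x k) - A2 xb)) (z - xb) \<le> r};
        \<Gamma> = {z. inner (x0 - x k) (z - x k) \<le> 0}
      in (\<exists>j. cond j) \<and> \<alpha> k = \<alpha>prev * \<theta> ^ (LEAST j. cond j) \<and>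
         T \<inter> \<Gamma> \<noteq> {} \<and> is_proj (T \<inter> \<Gamma>) x0 (x (Suc k)))"
proof -
  obtain xs where sol: "- (A1 xs + A2 xs) \<in> B xs"
    using assms(6) by (auto simp: add_eq_0_iff)
  show ?thesis
    using method2_iterates_exist[OF assms(1-5) sol assms(7-9,13,14)]
    unfolding method2_transition_def .
qed

end
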